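(* Let $N\ge 4$ be an integer and $a>0$ real. Let $H=H^{(N)}(a)$ be the real $N\times N$ tridiagonal matrix with $H_{nn}=a+2n-1$, $H_{n,n+1}=-n$, $H_{n+1,n}=-(a+n)$, all other entries zero, and write $D_n(a)=\prod_{j=1}^{n-1}(a+j)$. Then there exists a real symmetric heptadiagonal (bandwidth $3$) $N\times N$ matrix $\mathcal P_3=\mathcal P_3^{(N)}(a)$ with $H^\dagger\mathcal P_3=\mathcal P_3H$ whose entries are $(\mathcal P_3)_{11}=(\mathcal P_3)_{12}=(\mathcal P_3)_{13}=(\mathcal P_3)_{22}=0$, $(\mathcal P_3)_{14}=1$, $$(\mathcal P_3)_{nn}=-\frac{2(n-1)(n-2)\,(n-1)!\,(3a+5n-6)}{3D_n(a)}\quad(n=2,\dots,N-1),$$ $$(\mathcal P_3)_{n,n+1}=\frac{(n-1)\,n!\,(a+5n-7)}{2D_n(a)}\quad(n=2,\dots,N-2),\qquad (\mathcal P_3)_{n,n+2}=-\frac{(n-1)\,(n+1)!}{D_n(a)}\quad(n=2,\dots,N-2),$$ $$(\mathcal P_3)_{n,n+3}=\frac{(n+2)!}{6D_n(a)}\quad(n=2,\dots,N-3),$$ (the remaining entries $(\mathcal P_3)_{N-1,N}=(\mathcal P_3)_{N,N-1}$ and $(\mathcal P_3)_{NN}$ being some real numbers depending on $N$ and $a$). Consequently, with $\Theta_0,\mathcal P_1,\mathcal P_2$ as in the context, for all real $\alpha,\beta,\gamma$ the matrix $\Theta_3=\Theta_0+\alpha\mathcal P_1+\beta\mathcal P_2+\gamma\mathcal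 P_3$ satisfies $H^\dagger\Theta_3=\Theta_3H$, and it is a positive definite metric for $H$ whenever $|\alpha|,|\beta|,|\gamma|$ are sufficiently small.
   Context: $H^\dagger$ is the conjugate transpose. A metric for $H$ is a positive definite Hermitian matrix $\Theta$ with $H^\dagger\Theta=\Theta H$. $\Theta_0$ is the diagonal matrix with $(\Theta_0)_{nn}=(n-1)!/D_n(a)$; $\mathcal P_1$ is the real symmetric tridiagonal matrix with $(\mathcal P_1)_{11}=0$, $(\mathcal P_1)_{nn}=-2(n-1)(n-1)!/D_n(a)$ for $n\ge2$, $(\mathcal P_1)_{n,n+1}=(\mathcal P_1)_{n+1,n}=n!/D_n(a)$; $\mathcal P_2$ is any real symmetric pentadiagonal matrix with $H^\dagger\mathcal P_2=\mathcal P_2H$. All of $\Theta_0,\mathcal P_1,\mathcal P_2$ satisfy $H^\dagger X=XH$. Symmetric entries are understood: $(\mathcal P_3)_{ji}=(\mathcal P_3)_{ij}$. *)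

theory Defs
  imports Complex_Main
begin

text \<open>Real N x N matrices are represented as functions nat \<Rightarrow> nat \<Rightarrow> real,
  with the paper's 1-based indices i, j \<in> {1..N}; values outside this range are irrelevant.\<close>

definition Hmat :: "nat \<Rightarrow> real \<Rightarrow> nat \<Rightarrow> nat \<Rightarrow> real" where
  "Hmat N a i j =
     (if i \<in> {1..N} \<and> j \<in> {1..N} then
        (if j = i then a + 2 * real i - 1
         else if j = i + 1 then - real i
         else if i = j + 1 then - (a + real j)
         else 0)
      else 0)"

definition Dn :: "nat \<Rightarrow> real \<Rightarrow> real" where
  "Dn n a = (\<Prod>j = 1..n - 1. a + real j)"

text \<open>The relation H^dagger X = X H (H real, so H^dagger is the transpose), entrywise.\<close>
definition intertwines :: "nat \<Rightarrow> (nat \<Rightarrow> nat \<Rightarrow> real) \<Rightarrow> (nat \<Rightarrow> nat \<Rightarrow> real) \<Rightarrow> bool" where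
  "intertwines N H X \<longleftrightarrow>
     (\<forall>i\<in>{1..N}. \<forall>j\<in>{1..N}. (\<Sum>k = 1..N. H k i * X k j) = (\<Sum>k = 1..N. X i k * H k j))"

definition sym_mat :: "nat \<Rightarrow> (nat \<Rightarrow> nat \<Rightarrow> real) \<Rightarrow> bool" where
  "sym_mat N X \<longleftrightarrow> (\<forall>i\<in>{1..N}. \<forall>j\<in>{1..N}. X i j = X j i)"

text \<open>Band matrix of bandwidth w: entries with |i - j| > w vanish
  (w = 1 tridiagonal, w = 2 pentadiagonal, w = 3 heptadiagonal).\<close>
definition banded :: "nat \<Rightarrow> nat \<Rightarrow> (nat \<Rightarrow> nat \<Rightarrow> real) \<Rightarrow> bool" where
  "banded N w X \<longleftrightarrow> (\<forall>i\<in>{1..N}. \<forall>j\<in>{1..N}. (i > j + w \<or> j > i + w) \<longrightarrow> X i j = 0)"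

definition pos_def_mat :: "nat \<Rightarrow> (nat \<Rightarrow> nat \<Rightarrow> real) \<Rightarrow> bool" where
  "pos_def_mat N X \<longleftrightarrow> sym_mat N X \<and>
     (\<forall>x :: nat \<Rightarrow> real. (\<exists>i\<in>{1..N}. x i \<noteq> 0) \<longrightarrow>
        (\<Sum>i = 1..N. \<Sum>j = 1..N. x i * X i j * x j) > 0)"

definition is_metric :: "nat \<Rightarrow> (nat \<Rightarrow> nat \<Rightarrow> real) \<Rightarrow> (nat \<Rightarrow> nat \<Rightarrow> real) \<Rightarrow> bool" where
  "is_metric N H X \<longleftrightarrow> pos_def_mat N X \<and> intertwines N H X"

definition Theta0 :: "real \<Rightarrow> nat \<Rightarrow> nat \<Rightarrow> real" where
  "Theta0 a i j = (if i = j then fact (i - 1) / Dn i a else 0)"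

definition P1 :: "real \<Rightarrow> nat \<Rightarrow> nat \<Rightarrow> real" where
  "P1 a i j =
     (if i = j then (if i = 1 then 0 else - 2 * real (i - 1) * fact (i - 1) / Dn i a)
      else if j = i + 1 then fact i / Dn i a
      else if i = j + 1 then fact j / Dn j a
      else 0)"

end

theory Submission
  imports Defs
begin

text \<open>The diagonal matrix Theta0 symmetrises the tridiagonal H:
  Theta0(n+1,n+1) / Theta0(n,n) = n / (a+n) = H(n,n+1) / H(n+1,n), which is exactly
  H^T Theta0 = Theta0 H. Hence Theta0 q(H) is symmetric, intertwines H and has bandwidth deg q
  for every real polynomial q. Both P1 = Theta0 ((a+1) - H) and P3 = Theta0 q(H) for a suitable
  cubic q are of this form, and the band entries of P3 are read off from H^2 and H^3.
  Since Theta0 is diagonal with positive entries, its quadratic form dominates that of any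
  perturbation with small enough entries, which gives positive definiteness for small
  \<alpha>, \<beta>, \<gamma>.\<close>

section \<open>Matrices indexed by 1..N\<close>

definition mat_mult :: "nat \<Rightarrow> (nat \<Rightarrow> nat \<Rightarrow> real) \<Rightarrow> (nat \<Rightarrow> nat \<Rightarrow> real) \<Rightarrow> nat \<Rightarrow> nat \<Rightarrow> real" where
  "mat_mult N A B i j = (\<Sum>k = 1..N. A i k * B k j)"

definition id_mat :: "nat \<Rightarrow> nat \<Rightarrow> real" where
  "id_mat i j = (if i = j then 1 else 0)"

primrec mat_pow :: "nat \<Rightarrow> (nat \<Rightarrow> nat \<Rightarrow> real) \<Rightarrow> nat \<Rightarrow> nat \<Rightarrow> nat \<Rightarrow> real" where
  "mat_pow N A 0 = id_mat"
| "mat_pow N A (Suc k) = mat_mult N A (mat_pow N A k)"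

definition mat_poly :: "nat \<Rightarrow> (nat \<Rightarrow> nat \<Rightarrow> real) \<Rightarrow> real list \<Rightarrow> nat \<Rightarrow> nat \<Rightarrow> real" where
  "mat_poly N A cs i j = (\<Sum>k < length cs. cs ! k * mat_pow N A k i j)"

lemma mat_mult_assoc: "mat_mult N (mat_mult N A B) C i j = mat_mult N A (mat_mult N B C) i j"
  unfolding mat_mult_def by (simp add: sum_distrib_left sum_distrib_right mult.assoc) (rule sum.swap)

lemma mat_mult_cong:
  assumes "\<And>k. k \<in> {1..N} \<Longrightarrow> A i k = A' i k" and "\<And>k. k \<in> {1..N} \<Longrightarrow> B k j = B' k j"
  shows "mat_mult N A B i j = mat_mult N A' B' i j"
  unfolding mat_mult_def using assms by (intro sum.cong) auto

lemma mat_mult_diagonal_left: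
  assumes "\<And>i j. i \<noteq> j \<Longrightarrow> D i j = 0" and "i \<in> {1..N}"
  shows "mat_mult N D B i j = D i i * B i j"
proof -
  have "mat_mult N D B i j = (\<Sum>k = 1..N. if k = i then D i i * B i j else 0)"
    unfolding mat_mult_def by (intro sum.cong) (auto simp: assms(1))
  with assms(2) show ?thesis by simp
qed

lemma mat_mult_diagonal_right:
  assumes "\<And>i j. i \<noteq> j \<Longrightarrow> D i j = 0" and "j \<in> {1..N}"
  shows "mat_mult N B D i j = B i j * D j j"
proof -
  have "mat_mult N B D i j = (\<Sum>k = 1..N. if k = j then B i j * D j j else 0)"
    unfolding mat_mult_def by (intro sum.cong) (auto simp: assms(1))
  with assms(2) show ?thesis by simp
qed

lemma mat_mult_id_left: "i \<in> {1..N} \<Longrightarrow> mat_mult N id_mat B i j = B i j"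
  by (simp add: mat_mult_diagonal_left id_mat_def)

lemma mat_mult_id_right: "j \<in> {1..N} \<Longrightarrow> mat_mult N A id_mat i j = A i j"
  by (simp add: mat_mult_diagonal_right id_mat_def)

lemma mat_pow_commute:
  "i \<in> {1..N} \<Longrightarrow> j \<in> {1..N} \<Longrightarrow> mat_mult N (mat_pow N A k) A i j = mat_mult N A (mat_pow N A k) i j"
proof (induction k arbitrary: i j)
  case 0
  then show ?case by (simp add: mat_mult_id_left mat_mult_id_right)
next
  case (Suc k)
  have "mat_mult N (mat_pow N A (Suc k)) A i j = mat_mult N A (mat_mult N (mat_pow N A k) A) i j"
    by (simp add: mat_mult_assoc)
  also have "\<dots> = mat_mult N A (mat_pow N A (Suc k)) i j"
    by (simp, rule mat_mult_cong) (use Suc.IH Suc.prems in auto)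
  finally show ?case .
qed

lemma mat_pow_one: "j \<in> {1..N} \<Longrightarrow> mat_pow N A (Suc 0) i j = A i j"
  by (simp add: mat_mult_id_right)

lemma mat_mult_mat_poly:
  "mat_mult N X (mat_poly N A cs) i j = (\<Sum>k < length cs. cs ! k * mat_mult N X (mat_pow N A k) i j)"
  unfolding mat_mult_def mat_poly_def by (simp add: sum_distrib_left mult_ac) (rule sum.swap)

section \<open>Intertwining\<close>

lemma intertwines_iff_mat_mult:
  "intertwines N H X \<longleftrightarrow>
     (\<forall>i\<in>{1..N}. \<forall>j\<in>{1..N}. mat_mult N (\<lambda>i j. H j i) X i j = mat_mult N X H i j)"
  unfolding intertwines_def mat_mult_def by simp

lemma intertwines_cong:
  assumes "intertwines N H X" and "\<And>i j. i \<in> {1..N} \<Longrightarrow> j \<in> {1..N} \<Longrightarrow> X i j = Y i j"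
  shows "intertwines N H Y"
  using assms unfolding intertwines_iff_mat_mult
  by (metis (no_types, lifting) mat_mult_cong)

lemma intertwines_add_scaled:
  assumes "intertwines N H A" and "intertwines N H B"
  shows "intertwines N H (\<lambda>i j. A i j + c * B i j)"
  unfolding intertwines_def
proof (intro ballI)
  fix i j assume "i \<in> {1..N}" "j \<in> {1..N}"
  then have "(\<Sum>k = 1..N. H k i * A k j) = (\<Sum>k = 1..N. A i k * H k j)"
    and "(\<Sum>k = 1..N. H k i * B k j) = (\<Sum>k = 1..N. B i k * H k j)"
    using assms unfolding intertwines_def by blast+
  moreover have "(\<Sum>k = 1..N. H k i * (A k j + c * B k j))
      = (\<Sum>k = 1..N. H k i * A k j) + c * (\<Sum>k = 1..N. H k i * B k j)"
    and "(\<Sum>k = 1..N. (A i k + c * B i k) * H k j)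
      = (\<Sum>k = 1..N. A i k * H k j) + c * (\<Sum>k = 1..N. B i k * H k j)"
    by (simp_all add: algebra_simps sum.distrib sum_distrib_left)
  ultimately show "(\<Sum>k = 1..N. H k i * (A k j + c * B k j)) = (\<Sum>k = 1..N. (A i k + c * B i k) * H k j)"
    by simp
qed

lemma sym_mat_add_scaled: "sym_mat N A \<Longrightarrow> sym_mat N B \<Longrightarrow> sym_mat N (\<lambda>i j. A i j + c * B i j)"
  unfolding sym_mat_def by simp

lemma intertwines_sum:
  assumes "\<And>k. k \<in> K \<Longrightarrow> intertwines N H (X k)"
  shows "intertwines N H (\<lambda>i j. \<Sum>k\<in>K. c k * X k i j)"
  unfolding intertwines_def
proof (intro ballI)
  fix i j assume "i \<in> {1..N}" "j \<in> {1..N}"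
  then have "(\<Sum>l = 1..N. H l i * X k l j) = (\<Sum>l = 1..N. X k i l * H l j)" if "k \<in> K" for k
    using assms[OF that] unfolding intertwines_def by blast
  then have "(\<Sum>k\<in>K. c k * (\<Sum>l = 1..N. H l i * X k l j)) = (\<Sum>k\<in>K. c k * (\<Sum>l = 1..N. X k i l * H l j))"
    by simp
  then show "(\<Sum>l = 1..N. H l i * (\<Sum>k\<in>K. c k * X k l j)) = (\<Sum>l = 1..N. (\<Sum>k\<in>K. c k * X k i l) * H l j)"
    by (simp add: sum_distrib_left sum_distrib_right mult_ac sum.swap[where A = K])
qed

lemma intertwines_diagonal_iff:
  assumes "\<And>i j. i \<noteq> j \<Longrightarrow> D i j = 0"
  shows "intertwines N H D \<longleftrightarrow> (\<forall>i\<in>{1..N}. \<forall>j\<in>{1..N}. H j i * D j j = D i i * H i j)"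
  unfolding intertwines_iff_mat_mult
  by (simp add: mat_mult_diagonal_left mat_mult_diagonal_right assms)

lemma intertwines_mult_mat_pow:
  assumes "intertwines N H X"
  shows "intertwines N H (mat_mult N X (mat_pow N H k))"
  unfolding intertwines_iff_mat_mult
proof (intro ballI)
  fix i j assume i: "i \<in> {1..N}" and j: "j \<in> {1..N}"
  have "mat_mult N (\<lambda>i j. H j i) (mat_mult N X (mat_pow N H k)) i j
      = mat_mult N (mat_mult N (\<lambda>i j. H j i) X) (mat_pow N H k) i j"
    by (simp add: mat_mult_assoc)
  also have "\<dots> = mat_mult N (mat_mult N X H) (mat_pow N H k) i j"
    by (rule mat_mult_cong) (use assms i in \<open>auto simp: intertwines_iff_mat_mult\<close>)
  also have "\<dots> = mat_mult N X (mat_mult N H (mat_pow N H k)) i j"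
    by (simp add: mat_mult_assoc)
  also have "\<dots> = mat_mult N X (mat_mult N (mat_pow N H k) H) i j"
    by (rule mat_mult_cong) (use mat_pow_commute j in auto)
  also have "\<dots> = mat_mult N (mat_mult N X (mat_pow N H k)) H i j"
    by (simp add: mat_mult_assoc)
  finally show "mat_mult N (\<lambda>i j. H j i) (mat_mult N X (mat_pow N H k)) i j
      = mat_mult N (mat_mult N X (mat_pow N H k)) H i j" .
qed

lemma sym_mat_mult_mat_pow:
  assumes "sym_mat N X" and "intertwines N H X"
  shows "sym_mat N (mat_mult N X (mat_pow N H k))"
  unfolding sym_mat_def
proof (induction k)
  case 0
  then show ?case using assms(1) by (simp add: mat_mult_id_right sym_mat_def)
next
  case (Suc k)
  let ?Y = "mat_mult N X (mat_pow N H k)"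
  show ?case
  proof (intro ballI)
    fix i j assume i: "i \<in> {1..N}" and j: "j \<in> {1..N}"
    have "mat_mult N X (mat_pow N H (Suc k)) i j = mat_mult N (mat_mult N X H) (mat_pow N H k) i j"
      by (simp add: mat_mult_assoc)
    also have "\<dots> = mat_mult N (mat_mult N (\<lambda>i j. H j i) X) (mat_pow N H k) i j"
      by (rule mat_mult_cong) (use assms(2) i in \<open>auto simp: intertwines_iff_mat_mult\<close>)
    also have "\<dots> = mat_mult N (\<lambda>i j. H j i) ?Y i j"
      by (simp add: mat_mult_assoc)
    also have "\<dots> = mat_mult N ?Y H j i"
      unfolding mat_mult_def[of N "\<lambda>i j. H j i"] mat_mult_def[of N ?Y H]
      using Suc.IH i j by (intro sum.cong) auto
    also have "\<dots> = mat_mult N X (mat_mult N (mat_pow N H k) H) j i"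
      by (simp add: mat_mult_assoc)
    also have "\<dots> = mat_mult N X (mat_pow N H (Suc k)) j i"
      by (simp, rule mat_mult_cong) (use mat_pow_commute i in auto)
    finally show "mat_mult N X (mat_pow N H (Suc k)) i j = mat_mult N X (mat_pow N H (Suc k)) j i" .
  qed
qed

lemma intertwines_mult_mat_poly:
  assumes "intertwines N H X"
  shows "intertwines N H (mat_mult N X (mat_poly N H cs))"
  unfolding mat_mult_mat_poly[abs_def]
  by (intro intertwines_sum intertwines_mult_mat_pow assms)

lemma sym_mat_mult_mat_poly:
  assumes "sym_mat N X" and "intertwines N H X"
  shows "sym_mat N (mat_mult N X (mat_poly N H cs))"
  using sym_mat_mult_mat_pow[OF assms] by (simp add: sym_mat_def mat_mult_mat_poly)

section \<open>Band matrices\<close>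

lemma banded_mono: "banded N v X \<Longrightarrow> v \<le> w \<Longrightarrow> banded N w X"
  unfolding banded_def by auto

lemma banded_mat_pow:
  assumes "banded N 1 A"
  shows "banded N k (mat_pow N A k)"
proof (induction k)
  case 0
  then show ?case by (simp add: banded_def id_mat_def)
next
  case (Suc k)
  show ?case
    unfolding banded_def
  proof (intro ballI impI)
    fix i j assume i: "i \<in> {1..N}" and j: "j \<in> {1..N}" and far: "i > j + Suc k \<or> j > i + Suc k"
    have "A i l * mat_pow N A k l j = 0" if l: "l \<in> {1..N}" for l
    proof (cases "A i l = 0")
      case False
      with assms i l have "\<not> (i > l + 1 \<or> l > i + 1)"
        unfolding banded_def by blast
      with far Suc.IH l j show ?thesis
        unfolding banded_def by auto
    qed simp
    then show "mat_pow N A (Suc k) i j = 0"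
      unfolding mat_pow.simps mat_mult_def by (intro sum.neutral) blast
  qed
qed

lemma banded_mat_poly:
  assumes "banded N 1 A" and "length cs \<le> Suc w"
  shows "banded N w (mat_poly N A cs)"
proof -
  have "banded N w (mat_pow N A k)" if "k < length cs" for k
    using banded_mono[OF banded_mat_pow[OF assms(1)]] that assms(2) by simp
  then show ?thesis
    unfolding banded_def mat_poly_def by (simp add: sum.neutral)
qed

lemma banded_mult_diagonal_left:
  assumes "\<And>i j. i \<noteq> j \<Longrightarrow> D i j = 0" and "banded N w B"
  shows "banded N w (mat_mult N D B)"
  using assms(2) mat_mult_diagonal_left[of D, OF assms(1)] unfolding banded_def by auto

lemma sum_tridiagonal_row:
  assumes "banded N 1 A" and i: "1 \<le> i" "i \<le> N"
  shows "(\<Sum>l = 1..N. A i l * f l) =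
    (if 1 < i then A i (i - 1) * f (i - 1) else 0) + A i i * f i +
    (if i < N then A i (i + 1) * f (i + 1) else 0)"
proof -
  define L R where "L = {l \<in> {1..N}. l + 1 = i}" and "R = {l \<in> {1..N}. l = i + 1}"
  have L: "L = (if 1 < i then {i - 1} else {})" and R: "R = (if i < N then {i + 1} else {})"
    using i unfolding L_def R_def by auto
  have "(\<Sum>l = 1..N. A i l * f l) = (\<Sum>l \<in> L \<union> {i} \<union> R. A i l * f l)"
  proof (intro sum.mono_neutral_right ballI)
    fix l assume "l \<in> {1..N} - (L \<union> {i} \<union> R)"
    with assms show "A i l * f l = 0"
      unfolding banded_def L_def R_def by (cases "l < i") auto
  qed (use i in \<open>auto simp: L_def R_def\<close>)
  also have "\<dots> = (\<Sum>l\<in>L. A i l * f l) + A i i * f i + (\<Sum>l\<in>R. A i l * f l)"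
  proof -
    have "finite L" "finite R" "L \<inter> {i} = {}" "(L \<union> {i}) \<inter> R = {}"
      unfolding L_def R_def by auto
    then show ?thesis by (simp add: sum.union_disjoint)
  qed
  finally show ?thesis
    unfolding L R by simp
qed

lemma mat_pow_Suc_tridiagonal:
  assumes "banded N 1 A" and "i \<in> {1..N}"
  shows "mat_pow N A (Suc k) i j =
    (if 1 < i then A i (i - 1) * mat_pow N A k (i - 1) j else 0) + A i i * mat_pow N A k i j +
    (if i < N then A i (i + 1) * mat_pow N A k (i + 1) j else 0)"
  unfolding mat_pow.simps mat_mult_def using assms by (intro sum_tridiagonal_row) auto

lemma mat_pow_two_tridiagonal:
  assumes "banded N 1 A" and "i \<in> {1..N}" and "j \<in> {1..N}"
  shows "mat_pow N A 2 i j =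
    (if 1 < i then A i (i - 1) * A (i - 1) j else 0) + A i i * A i j +
    (if i < N then A i (i + 1) * A (i + 1) j else 0)"
  unfolding numeral_2_eq_2 mat_pow_Suc_tridiagonal[OF assms(1,2), of "Suc 0" j] mat_pow_one[OF assms(3)] ..

lemma mat_pow_three_tridiagonal:
  assumes "banded N 1 A" and "i \<in> {1..N}"
  shows "mat_pow N A 3 i j =
    (if 1 < i then A i (i - 1) * mat_pow N A 2 (i - 1) j else 0) + A i i * mat_pow N A 2 i j +
    (if i < N then A i (i + 1) * mat_pow N A 2 (i + 1) j else 0)"
  unfolding numeral_3_eq_3 numeral_2_eq_2 mat_pow_Suc_tridiagonal[OF assms, of "Suc (Suc 0)" j] ..

section \<open>Quadratic forms\<close>

definition quad_form :: "nat \<Rightarrow> (nat \<Rightarrow> nat \<Rightarrow> real) \<Rightarrow> (nat \<Rightarrow> real) \<Rightarrow> real" where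
  "quad_form N X x = (\<Sum>i = 1..N. \<Sum>j = 1..N. x i * X i j * x j)"

lemma quad_form_add: "quad_form N (\<lambda>i j. A i j + B i j) x = quad_form N A x + quad_form N B x"
  unfolding quad_form_def by (simp add: distrib_left distrib_right sum.distrib)

lemma abs_quad_form_le:
  "\<bar>quad_form N E x\<bar> \<le> (\<Sum>i = 1..N. \<Sum>j = 1..N. \<bar>E i j\<bar>) * (\<Sum>i = 1..N. (x i)\<^sup>2)"
proof -
  define S where "S = (\<Sum>i = 1..N. (x i)\<^sup>2)"
  have square_le: "(x i)\<^sup>2 \<le> S" if "i \<in> {1..N}" for i
    unfolding S_def using that by (intro member_le_sum) auto
  have abs_prod_le: "\<bar>x i\<bar> * \<bar>x j\<bar> \<le> S" if "i \<in> {1..N}" "j \<in> {1..N}" for i j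
  proof -
    have "2 * (\<bar>x i\<bar> * \<bar>x j\<bar>) \<le> (x i)\<^sup>2 + (x j)\<^sup>2"
      using sum_squares_ge_zero[of "\<bar>x i\<bar> - \<bar>x j\<bar>" 0] by (simp add: power2_eq_square algebra_simps)
    with square_le[OF that(1)] square_le[OF that(2)] show ?thesis by linarith
  qed
  have "\<bar>x i * E i j * x j\<bar> \<le> \<bar>E i j\<bar> * S" if "i \<in> {1..N}" "j \<in> {1..N}" for i j
  proof -
    have "\<bar>x i * E i j * x j\<bar> = \<bar>E i j\<bar> * (\<bar>x i\<bar> * \<bar>x j\<bar>)"
      by (simp add: abs_mult mult_ac)
    also have "\<dots> \<le> \<bar>E i j\<bar> * S"
      using abs_prod_le[OF that] by (simp add: mult_left_mono)
    finally show ?thesis .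
  qed
  then have "(\<Sum>i = 1..N. \<Sum>j = 1..N. \<bar>x i * E i j * x j\<bar>) \<le> (\<Sum>i = 1..N. \<Sum>j = 1..N. \<bar>E i j\<bar> * S)"
    by (intro sum_mono) auto
  moreover have "\<bar>quad_form N E x\<bar> \<le> (\<Sum>i = 1..N. \<Sum>j = 1..N. \<bar>x i * E i j * x j\<bar>)"
    unfolding quad_form_def by (rule order_trans[OF sum_abs sum_mono[OF sum_abs]])
  ultimately show ?thesis
    by (simp add: S_def sum_distrib_right)
qed

lemma quad_form_diagonal_ge:
  assumes "\<And>i j. i \<noteq> j \<Longrightarrow> D i j = 0" and "\<And>i. i \<in> {1..N} \<Longrightarrow> c \<le> D i i"
  shows "c * (\<Sum>i = 1..N. (x i)\<^sup>2) \<le> quad_form N D x"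
proof -
  have "quad_form N D x = (\<Sum>i = 1..N. D i i * (x i)\<^sup>2)"
    unfolding quad_form_def
  proof (intro sum.cong refl)
    fix i assume "i \<in> {1..N}"
    then have "(\<Sum>j = 1..N. x i * D i j * x j) = (\<Sum>j = 1..N. if j = i then D i i * (x i)\<^sup>2 else 0)"
      by (intro sum.cong) (auto simp: assms(1) power2_eq_square)
    with \<open>i \<in> {1..N}\<close> show "(\<Sum>j = 1..N. x i * D i j * x j) = D i i * (x i)\<^sup>2" by simp
  qed
  moreover have "c * (x i)\<^sup>2 \<le> D i i * (x i)\<^sup>2" if "i \<in> {1..N}" for i
    using assms(2)[OF that] by (simp add: mult_right_mono)
  ultimately show ?thesis
    by (simp add: sum_distrib_left) (intro sum_mono, auto)
qed

lemma quad_form_pos_diagonal_plus_small: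
  assumes "\<And>i j. i \<noteq> j \<Longrightarrow> D i j = 0" and "\<And>i. i \<in> {1..N} \<Longrightarrow> c \<le> D i i"
    and "(\<Sum>i = 1..N. \<Sum>j = 1..N. \<bar>E i j\<bar>) < c" and "\<exists>i\<in>{1..N}. x i \<noteq> 0"
  shows "quad_form N (\<lambda>i j. D i j + E i j) x > 0"
proof -
  define S where "S = (\<Sum>i = 1..N. (x i)\<^sup>2)"
  from assms(4) obtain k where "k \<in> {1..N}" "x k \<noteq> 0" by blast
  then have "S > 0"
    unfolding S_def by (intro sum_pos2[of _ k]) auto
  then have "(\<Sum>i = 1..N. \<Sum>j = 1..N. \<bar>E i j\<bar>) * S < c * S"
    using assms(3) by simp
  moreover have "c * S \<le> quad_form N D x"
    unfolding S_def by (rule quad_form_diagonal_ge[OF assms(1,2)])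
  moreover have "\<bar>quad_form N E x\<bar> \<le> (\<Sum>i = 1..N. \<Sum>j = 1..N. \<bar>E i j\<bar>) * S"
    unfolding S_def by (rule abs_quad_form_le)
  ultimately show ?thesis
    unfolding quad_form_add by linarith
qed

lemma diagonal_small_perturbation_pos:
  assumes "\<And>i j. i \<noteq> j \<Longrightarrow> D i j = 0" and "\<And>i. i \<in> {1..N} \<Longrightarrow> D i i > 0"
  shows "\<exists>\<epsilon>>0. \<forall>\<alpha> \<beta> \<gamma>. \<bar>\<alpha>\<bar> < \<epsilon> \<and> \<bar>\<beta>\<bar> < \<epsilon> \<and> \<bar>\<gamma>\<bar> < \<epsilon> \<longrightarrow>
    (\<forall>x. (\<exists>i\<in>{1..N}. x i \<noteq> 0) \<longrightarrow>
       quad_form N (\<lambda>i j. D i j + \<alpha> * E1 i j + \<beta> * E2 i j + \<gamma> * E3 i j) x > 0)"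
proof -
  define c where "c = Min (insert 1 ((\<lambda>i. D i i) ` {1..N}))"
  define B where "B = (\<Sum>i = 1..N. \<Sum>j = 1..N. \<bar>E1 i j\<bar> + \<bar>E2 i j\<bar> + \<bar>E3 i j\<bar>)"
  have "c > 0" unfolding c_def using assms(2) by (subst Min_gr_iff) auto
  have c_le: "c \<le> D i i" if "i \<in> {1..N}" for i
    unfolding c_def using that by (intro Min_le) auto
  have "B \<ge> 0" unfolding B_def by (intro sum_nonneg) auto
  define \<epsilon> where "\<epsilon> = c / (B + 1)"
  have "\<epsilon> > 0" and "\<epsilon> * B < c"
    unfolding \<epsilon>_def using \<open>c > 0\<close> \<open>B \<ge> 0\<close> by (simp_all add: field_simps)
  have "quad_form N (\<lambda>i j. D i j + \<alpha> * E1 i j + \<beta> * E2 i j + \<gamma> * E3 i j) x > 0"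
    if small: "\<bar>\<alpha>\<bar> < \<epsilon>" "\<bar>\<beta>\<bar> < \<epsilon>" "\<bar>\<gamma>\<bar> < \<epsilon>" and "\<exists>i\<in>{1..N}. x i \<noteq> 0" for \<alpha> \<beta> \<gamma> x
  proof -
    define E where "E = (\<lambda>i j. \<alpha> * E1 i j + \<beta> * E2 i j + \<gamma> * E3 i j)"
    have "\<bar>E i j\<bar> \<le> \<epsilon> * (\<bar>E1 i j\<bar> + \<bar>E2 i j\<bar> + \<bar>E3 i j\<bar>)" for i j
    proof -
      have "\<bar>E i j\<bar> \<le> \<bar>\<alpha>\<bar> * \<bar>E1 i j\<bar> + \<bar>\<beta>\<bar> * \<bar>E2 i j\<bar> + \<bar>\<gamma>\<bar> * \<bar>E3 i j\<bar>"
        unfolding E_def abs_mult[symmetric]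
        by (rule order_trans[OF abs_triangle_ineq add_right_mono[OF abs_triangle_ineq]])
      also have "\<dots> \<le> \<epsilon> * \<bar>E1 i j\<bar> + \<epsilon> * \<bar>E2 i j\<bar> + \<epsilon> * \<bar>E3 i j\<bar>"
        using small by (intro add_mono mult_right_mono) auto
      finally show ?thesis by (simp add: distrib_left)
    qed
    then have "(\<Sum>i = 1..N. \<Sum>j = 1..N. \<bar>E i j\<bar>) \<le> \<epsilon> * B"
      unfolding B_def sum_distrib_left by (intro sum_mono) auto
    with \<open>\<epsilon> * B < c\<close> have "(\<Sum>i = 1..N. \<Sum>j = 1..N. \<bar>E i j\<bar>) < c" by linarith
    from quad_form_pos_diagonal_plus_small[of D N c E x, OF assms(1) c_le this that(4)]
    show ?thesis by (simp add: E_def add.assoc)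
  qed
  with \<open>\<epsilon> > 0\<close> show ?thesis by blast
qed

section \<open>The matrices Theta0 q(H)\<close>

lemma Hmat_banded: "banded N 1 (Hmat N a)"
  unfolding banded_def Hmat_def by auto

lemma Dn_pos: "a > 0 \<Longrightarrow> Dn n a > 0"
  unfolding Dn_def by (rule prod_pos) auto

lemma Dn_Suc: "1 \<le> n \<Longrightarrow> Dn (Suc n) a = Dn n a * (a + real n)"
  unfolding Dn_def by (cases n) (auto simp: prod.nat_ivl_Suc' mult.commute)

lemma Theta0_diagonal: "i \<noteq> j \<Longrightarrow> Theta0 a i j = 0"
  by (simp add: Theta0_def)

lemma sym_Theta0: "sym_mat N (Theta0 a)"
  by (simp add: sym_mat_def Theta0_def)

lemma Theta0_pos: "a > 0 \<Longrightarrow> Theta0 a i i > 0"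
  by (simp add: Theta0_def Dn_pos)

lemma Theta0_Suc: "1 \<le> i \<Longrightarrow> Theta0 a (Suc i) (Suc i) = Theta0 a i i * real i / (a + real i)"
  by (cases i) (simp_all add: Theta0_def Dn_Suc)

lemma Theta0_intertwines:
  assumes "a > 0"
  shows "intertwines N (Hmat N a) (Theta0 a)"
proof -
  have step: "Hmat N a (Suc i) i * Theta0 a (Suc i) (Suc i) = Theta0 a i i * Hmat N a i (Suc i)"
    if "1 \<le> i" "Suc i \<le> N" for i
  proof -
    have "a + real i \<noteq> 0" using assms by simp
    then show ?thesis
      using that by (simp add: Theta0_Suc Hmat_def field_simps)
  qed
  show ?thesis
  proof (rule intertwines_diagonal_iff[THEN iffD2], erule Theta0_diagonal, intro ballI)
    fix i j assume "i \<in> {1..N}" "j \<in> {1..N}"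
    then consider "j = Suc i" | "i = Suc j" | "i = j" | "Hmat N a i j = 0" "Hmat N a j i = 0"
      unfolding Hmat_def by force
    then show "Hmat N a j i * Theta0 a j j = Theta0 a i i * Hmat N a i j"
      by cases (use step \<open>i \<in> {1..N}\<close> \<open>j \<in> {1..N}\<close> in \<open>auto simp: mult.commute\<close>)
  qed
qed

definition Theta0_poly :: "nat \<Rightarrow> real \<Rightarrow> real list \<Rightarrow> nat \<Rightarrow> nat \<Rightarrow> real" where
  "Theta0_poly N a cs = mat_mult N (Theta0 a) (mat_poly N (Hmat N a) cs)"

lemma Theta0_poly_entry:
  "i \<in> {1..N} \<Longrightarrow> Theta0_poly N a cs i j = Theta0 a i i * mat_poly N (Hmat N a) cs i j"
  unfolding Theta0_poly_def by (rule mat_mult_diagonal_left[OF Theta0_diagonal])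

lemma intertwines_Theta0_poly: "a > 0 \<Longrightarrow> intertwines N (Hmat N a) (Theta0_poly N a cs)"
  unfolding Theta0_poly_def by (intro intertwines_mult_mat_poly Theta0_intertwines)

lemma sym_Theta0_poly: "a > 0 \<Longrightarrow> sym_mat N (Theta0_poly N a cs)"
  unfolding Theta0_poly_def
  by (intro sym_mat_mult_mat_poly Theta0_intertwines sym_Theta0)

lemma banded_Theta0_poly: "length cs \<le> Suc w \<Longrightarrow> banded N w (Theta0_poly N a cs)"
  unfolding Theta0_poly_def
  by (intro banded_mult_diagonal_left[OF Theta0_diagonal] banded_mat_poly Hmat_banded)

lemma P1_eq_Theta0_poly:
  assumes "a > 0" and "i \<in> {1..N}" and "j \<in> {1..N}"
  shows "P1 a i j = Theta0_poly N a [a + 1, -1] i j"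
proof -
  have "Theta0_poly N a [a + 1, -1] i j = Theta0 a i i * ((a + 1) * id_mat i j - Hmat N a i j)"
    using assms by (simp add: Theta0_poly_entry mat_poly_def lessThan_Suc mat_mult_id_right)
  also have "\<dots> = P1 a i j"
    using assms Dn_pos[OF assms(1), of i] Dn_pos[OF assms(1), of j] Dn_Suc[of j a]
    by (auto simp: id_mat_def Hmat_def Theta0_def P1_def field_simps fact_reduce)
  finally show ?thesis ..
qed

lemma intertwines_P1:
  assumes "a > 0"
  shows "intertwines N (Hmat N a) (P1 a)"
  using intertwines_Theta0_poly[OF assms, of N "[a + 1, -1]"]
  by (rule intertwines_cong) (metis P1_eq_Theta0_poly[OF assms])

lemma sym_P1: "sym_mat N (P1 a)"
  unfolding sym_mat_def P1_def by auto

lemma Theta0_perturbation_is_metric: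
  assumes "a > 0"
    and "sym_mat N X" "intertwines N (Hmat N a) X" "sym_mat N Y" "intertwines N (Hmat N a) Y"
  shows "(\<forall>\<alpha> \<beta> \<gamma>. intertwines N (Hmat N a)
            (\<lambda>i j. Theta0 a i j + \<alpha> * P1 a i j + \<beta> * X i j + \<gamma> * Y i j)) \<and>
    (\<exists>\<epsilon>>0. \<forall>\<alpha> \<beta> \<gamma>. \<bar>\<alpha>\<bar> < \<epsilon> \<and> \<bar>\<beta>\<bar> < \<epsilon> \<and> \<bar>\<gamma>\<bar> < \<epsilon> \<longrightarrow>
        is_metric N (Hmat N a) (\<lambda>i j. Theta0 a i j + \<alpha> * P1 a i j + \<beta> * X i j + \<gamma> * Y i j))"
proof -
  have "sym_mat N (\<lambda>i j. Theta0 a i j + \<alpha> * P1 a i j + \<beta> * X i j + \<gamma> * Y i j)"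
    and "intertwines N (Hmat N a) (\<lambda>i j. Theta0 a i j + \<alpha> * P1 a i j + \<beta> * X i j + \<gamma> * Y i j)"
    for \<alpha> \<beta> \<gamma>
    using assms
    by (intro sym_mat_add_scaled sym_Theta0 sym_P1 intertwines_add_scaled Theta0_intertwines intertwines_P1;
        simp)+
  moreover obtain \<epsilon> where "\<epsilon> > 0" and "\<forall>\<alpha> \<beta> \<gamma>. \<bar>\<alpha>\<bar> < \<epsilon> \<and> \<bar>\<beta>\<bar> < \<epsilon> \<and> \<bar>\<gamma>\<bar> < \<epsilon> \<longrightarrow>
      (\<forall>x. (\<exists>i\<in>{1..N}. x i \<noteq> 0) \<longrightarrow>
        quad_form N (\<lambda>i j. Theta0 a i j + \<alpha> * P1 a i j + \<beta> * X i j + \<gamma> * Y i j) x > 0)"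
    using diagonal_small_perturbation_pos[of "Theta0 a" N "P1 a" X Y] Theta0_diagonal
      Theta0_pos[OF assms(1)] by blast
  ultimately show ?thesis
    unfolding is_metric_def pos_def_mat_def quad_form_def by blast
qed

section \<open>The matrix P3\<close>

text \<open>The cubic is fixed by requiring the first row of P3 to be the fourth unit vector: the first
  row of Theta0 q(H) is the first row of q(H), and the first rows of 1, H, H^2, H^3 are
  independent.\<close>
definition P3 :: "nat \<Rightarrow> real \<Rightarrow> nat \<Rightarrow> nat \<Rightarrow> real" where
  "P3 N a = Theta0_poly N a [(a + 1) * (a + 2) * (a + 3) / 6, - ((a + 2) * (a + 3) / 2), (a + 3) / 2, - 1 / 6]"

lemma P3_entry:
  assumes "i \<in> {1..N}" and "j \<in> {1..N}"
  shows "P3 N a i j = Theta0 a i i *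
    ((a + 1) * (a + 2) * (a + 3) / 6 * id_mat i j - (a + 2) * (a + 3) / 2 * Hmat N a i j
     + (a + 3) / 2 * mat_pow N (Hmat N a) 2 i j - 1 / 6 * mat_pow N (Hmat N a) 3 i j)"
proof -
  have "mat_poly N (Hmat N a) [(a + 1) * (a + 2) * (a + 3) / 6, - ((a + 2) * (a + 3) / 2), (a + 3) / 2, - 1 / 6] i j
      = (a + 1) * (a + 2) * (a + 3) / 6 * id_mat i j - (a + 2) * (a + 3) / 2 * Hmat N a i j
        + (a + 3) / 2 * mat_pow N (Hmat N a) 2 i j - 1 / 6 * mat_pow N (Hmat N a) 3 i j"
    using mat_pow_one[OF assms(2)]
    by (simp add: mat_poly_def lessThan_Suc numeral_3_eq_3 numeral_2_eq_2 del: mat_pow.simps(2))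
  then show ?thesis
    using assms(1) by (simp add: P3_def Theta0_poly_entry)
qed

lemmas P3_expand = P3_entry mat_pow_three_tridiagonal[OF Hmat_banded] mat_pow_two_tridiagonal[OF Hmat_banded]

lemma P3_diagonal:
  assumes "a > 0" and "n \<in> {2..N - 1}"
  shows "P3 N a n n =
    - (2 * real (n - 1) * real (n - 2) * fact (n - 1) * (3 * a + 5 * real n - 6)) / (3 * Dn n a)"
proof -
  define m where "m = n - 2"
  have "n = m + 2" "m + 3 \<le> N" using assms(2) unfolding m_def by auto
  with Dn_pos[OF assms(1), of n] show ?thesis
    by (simp add: P3_expand, simp add: Hmat_def Theta0_def id_mat_def, auto simp: field_simps)
qed

lemma P3_superdiagonal:
  assumes "a > 0" and "n \<in> {2..N - 2}"
  shows "P3 N a n (n + 1) = (real (n - 1) * fact n * (a + 5 * real n - 7)) / (2 * Dn n a)"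
proof -
  define m where "m = n - 2"
  have "n = m + 2" "m + 4 \<le> N" using assms(2) unfolding m_def by auto
  with Dn_pos[OF assms(1), of n] show ?thesis
    by (simp add: P3_expand, simp add: Hmat_def Theta0_def id_mat_def, auto simp: field_simps)
qed

lemma P3_second_superdiagonal:
  assumes "a > 0" and "n \<in> {2..N - 2}"
  shows "P3 N a n (n + 2) = - (real (n - 1) * fact (n + 1)) / Dn n a"
proof -
  define m where "m = n - 2"
  have "n = m + 2" "m + 4 \<le> N" using assms(2) unfolding m_def by auto
  with Dn_pos[OF assms(1), of n] show ?thesis
    by (simp add: P3_expand, simp add: Hmat_def Theta0_def id_mat_def, auto simp: field_simps)
qed

lemma P3_third_superdiagonal:
  assumes "a > 0" and "n \<in> {2..N - 3}"
  shows "P3 N a n (n + 3) = fact (n + 2) / (6 * Dn n a)"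
proof -
  define m where "m = n - 2"
  have "n = m + 2" "m + 5 \<le> N" using assms(2) unfolding m_def by auto
  with Dn_pos[OF assms(1), of n] show ?thesis
    by (simp add: P3_expand, simp add: Hmat_def Theta0_def id_mat_def, auto simp: field_simps)
qed

lemma P3_first_row:
  assumes "4 \<le> N"
  shows "P3 N a 1 1 = 0" "P3 N a 1 2 = 0" "P3 N a 1 3 = 0" "P3 N a 2 2 = 0" "P3 N a 1 4 = 1"
  using assms
  by (simp_all add: P3_expand, simp_all add: Hmat_def Theta0_def id_mat_def Dn_def numeral_eq_Suc,
      auto simp: field_simps)

theorem lemma4:
  fixes N :: nat and a :: real
  assumes "N \<ge> 4" and "a > 0"
  shows "\<exists>P3 :: nat \<Rightarrow> nat \<Rightarrow> real.
    sym_mat N P3 \<and> banded N 3 P3 \<and> intertwines N (Hmat N a) P3 \<and>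
    P3 1 1 = 0 \<and> P3 1 2 = 0 \<and> P3 1 3 = 0 \<and> P3 2 2 = 0 \<and> P3 1 4 = 1 \<and>
    (\<forall>n\<in>{2..N-1}. P3 n n =
       - (2 * real (n - 1) * real (n - 2) * fact (n - 1) * (3 * a + 5 * real n - 6)) / (3 * Dn n a)) \<and>
    (\<forall>n\<in>{2..N-2}. P3 n (n + 1) =
       (real (n - 1) * fact n * (a + 5 * real n - 7)) / (2 * Dn n a)) \<and>
    (\<forall>n\<in>{2..N-2}. P3 n (n + 2) = - (real (n - 1) * fact (n + 1)) / Dn n a) \<and>
    (\<forall>n\<in>{2..N-3}. P3 n (n + 3) = fact (n + 2) / (6 * Dn n a)) \<and>
    (\<forall>P2 :: nat \<Rightarrow> nat \<Rightarrow> real.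
       sym_mat N P2 \<and> banded N 2 P2 \<and> intertwines N (Hmat N a) P2 \<longrightarrow>
       (\<forall>\<alpha> \<beta> \<gamma> :: real. intertwines N (Hmat N a)
           (\<lambda>i j. Theta0 a i j + \<alpha> * P1 a i j + \<beta> * P2 i j + \<gamma> * P3 i j)) \<and>
       (\<exists>\<epsilon> > 0. \<forall>\<alpha> \<beta> \<gamma> :: real. \<bar>\<alpha>\<bar> < \<epsilon> \<and> \<bar>\<beta>\<bar> < \<epsilon> \<and> \<bar>\<gamma>\<bar> < \<epsilon> \<longrightarrow>
           is_metric N (Hmat N a)
             (\<lambda>i j. Theta0 a i j + \<alpha> * P1 a i j + \<beta> * P2 i j + \<gamma> * P3 i j)))"
proof -
  have P3: "sym_mat N (P3 N a)" "banded N 3 (P3 N a)" "intertwines N (Hmat N a) (P3 N a)"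
    unfolding P3_def using assms(2)
    by (simp_all add: sym_Theta0_poly banded_Theta0_poly intertwines_Theta0_poly)
  show ?thesis
    using P3 P3_first_row[OF assms(1)] P3_diagonal[OF assms(2)] P3_superdiagonal[OF assms(2)]
      P3_second_superdiagonal[OF assms(2)] P3_third_superdiagonal[OF assms(2)]
      Theta0_perturbation_is_metric[OF assms(2) _ _ P3(1,3)]
    by (intro exI[of _ "P3 N a"]) blast
qed

end
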